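(* Let $p\ge 2$, $d\in\{0,\dots,9\}$ and $i\in\{10^{p-2},\dots,10^{p-1}-1\}$ be integers. The sequence $\big(P_{(d,(10i+d+1)10^{n-p+1}-1,p)}\big)_{n\ge p}$ converges, as $n\to\infty$, to $$\frac{\alpha_{(d,p)}10^{p-1}+i+1-10^{p-2}-d\,k_{(d,p,i)}-9l_{(d,p,i)}+m_{(d,p,i)}+n_{(d,p,i)}+10^{p-2}\ln\big(\frac{10^{p-1}+d}{10^{p-1}}\big)}{10i+d+1},$$ where $k_{(d,p,i)}=\sum_{j=10^{p-2}}^{i}\ln\frac{10j+d+1}{10j+d}$, $l_{(d,p,i)}=\sum_{j=10^{p-2}}^{i}j\ln\frac{10j+d+1}{10j+d}$, $m_{(d,p,i)}=\sum_{j=10^{p-2}}^{i-1}\ln\frac{10(j+1)+d}{10j+d+1}$, $n_{(d,p,i)}=\sum_{j=10^{p-2}}^{i-1}j\ln\frac{10(j+1)+d}{10j+d+1}$, and $$\alpha_{(d,p)}=\frac{1}{10}+\frac{n_{(d,p)}+m_{(d,p)}-9l_{(d,p)}-d\,k_{(d,p)}}{9\times10^{p-1}}+\frac{1}{90}\ln\Big(\frac{10^{p-1}+d}{10^{p-1}}\Big)+\frac{1}{9}\ln\Big(\frac{10^{p}}{10^{p}-10+d+1}\Big)$$ with $k_{(d,p)}=k_{(d,p,10^{p-1}-1)}$, $l_{(d,p)}=l_{(d,p,10^{p-1}-1)}$, $m_{(d,p)}=\sum_{j=10^{p-2}}^{10^{p-1}-2}\ln\frac{10(j+1)+d}{10j+d+1}$,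 $n_{(d,p)}=\sum_{j=10^{p-2}}^{10^{p-1}-2}j\ln\frac{10(j+1)+d}{10j+d+1}$.
   Context: For an integer $x\ge 10^{p-1}$, the "$p$-th digit of $x$" is the $p$-th digit of its decimal expansion counted from the left. For $d\in\{0,\dots,9\}$ and $m\ge 10^{p-1}$, let $N_d(m)$ be the number of integers $x$ with $10^{p-1}\le x\le m$ whose $p$-th digit is $d$. For $N\ge 10^{p-1}$, $$P_{(d,N,p)}=\frac{1}{N+1-10^{p-1}}\sum_{m=10^{p-1}}^{N}\frac{N_d(m)}{m+1-10^{p-1}},$$ the probability that the $p$-th digit of $x$ is $d$ when $m$ is chosen uniformly in $\{10^{p-1},\dots,N\}$ and then $x$ uniformly in $\{10^{p-1},\dots,m\}$. The number $\alpha_{(d,p)}$ is the limit of $P_{(d,10^n-1,p)}$ as $n\to\infty$. Here $\ln$ is the natural logarithm and empty sums are zero. *)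

theory Defs
  imports Complex_Main
begin

definition num_digits :: "nat \<Rightarrow> nat" where
  "num_digits x = (LEAST k. x < 10 ^ k)"

(* p-th decimal digit of x counted from the left (meaningful for x \<ge> 10^(p-1), p \<ge> 1) *)
definition digit_at :: "nat \<Rightarrow> nat \<Rightarrow> nat" where
  "digit_at p x = (x div 10 ^ (num_digits x - p)) mod 10"

definition Ncount :: "nat \<Rightarrow> nat \<Rightarrow> nat \<Rightarrow> nat" where
  "Ncount d p m = card {x. 10 ^ (p - 1) \<le> x \<and> x \<le> m \<and> digit_at p x = d}"

definition Pprob :: "nat \<Rightarrow> nat \<Rightarrow> nat \<Rightarrow> real" where
  "Pprob d N p = (1 / real (N + 1 - 10 ^ (p - 1))) *
     (\<Sum>m = 10 ^ (p - 1)..N. real (Ncount d p m) / real (m + 1 - 10 ^ (p - 1)))"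

definition kk :: "nat \<Rightarrow> nat \<Rightarrow> nat \<Rightarrow> real" where
  "kk d p i = (\<Sum>j = 10 ^ (p - 2)..i. ln (real (10 * j + d + 1) / real (10 * j + d)))"

definition ll :: "nat \<Rightarrow> nat \<Rightarrow> nat \<Rightarrow> real" where
  "ll d p i = (\<Sum>j = 10 ^ (p - 2)..i. real j * ln (real (10 * j + d + 1) / real (10 * j + d)))"

definition mm :: "nat \<Rightarrow> nat \<Rightarrow> nat \<Rightarrow> real" where
  "mm d p i = (\<Sum>j \<in> {10 ^ (p - 2)..<i}. ln (real (10 * (j + 1) + d) / real (10 * j + d + 1)))"

definition nn :: "nat \<Rightarrow> nat \<Rightarrow> nat \<Rightarrow> real" where
  "nn d p i = (\<Sum>j \<in> {10 ^ (p - 2)..<i}. real j * ln (real (10 * (j + 1) + d) / real (10 * j + d + 1)))"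

(* closed form for alpha_{(d,p)}; m_{(d,p)}, n_{(d,p)} run j = 10^(p-2) .. 10^(p-1)-2,
   i.e. mm/nn with upper (exclusive) bound 10^(p-1)-1 *)
definition alpha_formula :: "nat \<Rightarrow> nat \<Rightarrow> real" where
  "alpha_formula d p =
     1 / 10
     + (nn d p (10 ^ (p - 1) - 1) + mm d p (10 ^ (p - 1) - 1)
        - 9 * ll d p (10 ^ (p - 1) - 1) - real d * kk d p (10 ^ (p - 1) - 1)) / (9 * 10 ^ (p - 1))
     + (1 / 90) * ln ((10 ^ (p - 1) + real d) / 10 ^ (p - 1))
     + (1 / 9) * ln (10 ^ p / (10 ^ p - 10 + real d + 1))"

end

theory Submission
  imports Defs "HOL-Analysis.Harmonic_Numbers" "HOL-Real_Asymp.Real_Asymp"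
begin

text \<open>
  Write \<open>x \<ge> 10^(p-1)\<close> as \<open>x = q * 10^e + r\<close> with \<open>10^(p-1) \<le> q < 10^p\<close>
  and \<open>r < 10^e\<close>. The \<open>p\<close>-th digit of \<open>x\<close> is the last digit of \<open>q\<close>, so \<open>N_d\<close>
  is affine in \<open>r\<close> on each such block, and the sum of \<open>N_d(m) / (m + 1 - 10^(p-1))\<close>
  over a block is affine in a difference of harmonic numbers; divided by \<open>10^e\<close> it tends
  to the logarithmic term \<open>block_limit q\<close>. Up to \<open>m < c * 10^e\<close> the sum splits into the
  complete lower levels, whose average with weights \<open>10^(e'-e)\<close> tends to one ninth of
  the full level sum of these terms, and the top level up to \<open>c\<close>. For
  \<open>c = 10 i + d + 1\<close> the top level sum telescopes into the sums \<open>k, l, m, n\<close>.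
\<close>

lemma num_digits_eqI:
  assumes "10 ^ k \<le> x" and "x < 10 ^ Suc k"
  shows "num_digits x = Suc k"
  unfolding num_digits_def
proof (rule Least_equality)
  fix y assume "x < 10 ^ y"
  with assms(1) have "(10::nat) ^ k < 10 ^ y" by linarith
  then show "Suc k \<le> y" by (simp add: Suc_le_eq)
qed (fact assms(2))

lemma digit_at_prefix:
  assumes "1 \<le> p" and "10 ^ (p - 1) \<le> q" and "q < 10 ^ p" and "r < 10 ^ e"
  shows "digit_at p (q * 10 ^ e + r) = q mod 10"
proof -
  have "10 ^ (p - 1 + e) \<le> q * 10 ^ e + r"
    using assms(2) by (simp add: power_add trans_le_add1)
  moreover have "q * 10 ^ e + r < 10 ^ Suc (p - 1 + e)"
  proof -
    have "q * 10 ^ e + r < (q + 1) * 10 ^ e" using assms(4) by simp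
    also have "\<dots> \<le> 10 ^ p * 10 ^ e" using assms(3) by (intro mult_right_mono) auto
    finally show ?thesis using assms(1) by (simp add: power_add)
  qed
  ultimately have "num_digits (q * 10 ^ e + r) - p = e"
    using assms(1) by (simp add: num_digits_eqI)
  then show ?thesis unfolding digit_at_def using assms(4) by simp
qed

lemma le_mult_power_10: "q \<le> q * (10::nat) ^ e"
proof -
  have "q * 1 \<le> q * 10 ^ e" by (rule mult_le_mono2) simp
  then show ?thesis by simp
qed

lemma Ncount_eq_0: "m < 10 ^ (p - 1) \<Longrightarrow> Ncount d p m = 0"
  unfolding Ncount_def by auto

lemma Ncount_Suc:
  assumes "10 ^ (p - 1) \<le> Suc m"
  shows "Ncount d p (Suc m) = Ncount d p m + of_bool (digit_at p (Suc m) = d)"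
proof -
  let ?S = "\<lambda>m. {x. 10 ^ (p - 1) \<le> x \<and> x \<le> m \<and> digit_at p x = d}"
  have "?S (Suc m) = (if digit_at p (Suc m) = d then insert (Suc m) (?S m) else ?S m)"
    using assms by (auto simp: le_Suc_eq)
  moreover have "finite (?S m)" by (rule finite_subset[of _ "{..m}"]) auto
  ultimately show ?thesis unfolding Ncount_def by auto
qed

lemma sum_inverse_eq_harm_diff:
  "(\<Sum>r<M. 1 / (real D + 1 + real r)) = harm (D + M) - (harm D :: real)"
  by (induction M) (simp_all add: harm_Suc inverse_eq_divide add_ac)

lemma harm_diff_tendsto_ln:
  fixes q c :: nat
  assumes "q > 0"
  shows "(\<lambda>M. harm (q * M - c + M) - harm (q * M - c) :: real) \<longlonglongrightarrow> ln ((q + 1) / q)"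
proof -
  define b where "b M = q * M - c" for M
  have b_tendsto: "filterlim b sequentially sequentially"
    by (rule filterlim_at_top_mono[OF filterlim_minus_const_nat_at_top[of c]])
       (use assms in \<open>auto simp: b_def intro!: always_eventually diff_le_mono\<close>)
  then have bM_tendsto: "filterlim (\<lambda>M. b M + M) sequentially sequentially"
    by (rule filterlim_at_top_mono) auto
  have "(\<lambda>M. harm (b M + M) - ln (real (b M + M)) :: real) \<longlonglongrightarrow> euler_mascheroni"
    using filterlim_compose[OF euler_mascheroni_LIMSEQ bM_tendsto] by (simp add: o_def)
  moreover have "(\<lambda>M. harm (b M) - ln (real (b M)) :: real) \<longlonglongrightarrow> euler_mascheroni"
    using filterlim_compose[OF euler_mascheroni_LIMSEQ b_tendsto] by (simp add: o_def)
  moreover have "(\<lambda>M. ln ((real q * M - c + M) / (real q * M - c))) \<longlonglongrightarrow> ln ((q + 1) / q)"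
    using assms by (real_asymp simp: divide_inverse)
  ultimately have "(\<lambda>M. (harm (b M + M) - ln (real (b M + M))) - (harm (b M) - ln (real (b M)))
      + ln ((real q * M - c + M) / (real q * M - c)) :: real)
      \<longlonglongrightarrow> euler_mascheroni - euler_mascheroni + ln ((q + 1) / q)"
    by (rule tendsto_add[OF tendsto_diff])
  moreover have "\<forall>\<^sub>F M in sequentially.
      (harm (b M + M) - ln (real (b M + M))) - (harm (b M) - ln (real (b M)))
        + ln ((real q * M - c + M) / (real q * M - c)) = harm (q * M - c + M) - harm (q * M - c)"
  proof (rule eventually_sequentiallyI[of "Suc c"])
    fix M assume "Suc c \<le> M"
    moreover have "M \<le> q * M" using assms by simp
    ultimately have "c < q * M" by linarith
    then have "real q * M - c = real (b M)" and "0 < b M"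
      unfolding b_def by (simp_all add: of_nat_diff)
    then have "ln ((real q * M - c + M) / (real q * M - c))
        = ln (real (b M + M)) - ln (real (b M))"
      by (simp add: ln_div)
    then show "(harm (b M + M) - ln (real (b M + M))) - (harm (b M) - ln (real (b M)))
      + ln ((real q * M - c + M) / (real q * M - c)) = harm (q * M - c + M) - harm (q * M - c)"
      unfolding b_def by simp
  qed
  ultimately show ?thesis by (simp add: Lim_transform_eventually)
qed

text \<open>Unrolled, \<open>w e\<close> is \<open>b^-e * w 0\<close> plus the sum of the \<open>a e'\<close>, \<open>e' < e\<close>, with
  weights \<open>b^(e'-e)\<close>, whose total tends to \<open>1 / (b - 1)\<close>.\<close>

lemma tendsto_recurrence_divide:
  fixes w a :: "nat \<Rightarrow> real"
  assumes "b > 1" and "a \<longlonglongrightarrow> A" and "\<And>e. w (Suc e) = (w e + a e) / b"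
  shows "w \<longlonglongrightarrow> A / (b - 1)"
proof (rule LIMSEQ_I)
  fix r :: real assume "r > 0"
  define z where "z e = w e - A / (b - 1)" for e
  have z_Suc: "z (Suc e) = (z e + (a e - A)) / b" for e
    using assms(1) unfolding z_def assms(3) by (simp add: field_simps)
  obtain N where N: "\<And>n. n \<ge> N \<Longrightarrow> \<bar>a n - A\<bar> < (b - 1) * r / 2"
    using LIMSEQ_D[OF assms(2), of "(b - 1) * r / 2"] \<open>r > 0\<close> assms(1) by auto
  have z_bound: "\<bar>z (N + j)\<bar> \<le> \<bar>z N\<bar> / b ^ j + r / 2" for j
  proof (induction j)
    case 0
    then show ?case using \<open>r > 0\<close> by simp
  next
    case (Suc j)
    have "\<bar>z (N + Suc j)\<bar> \<le> (\<bar>z (N + j)\<bar> + \<bar>a (N + j) - A\<bar>) / b"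
      using assms(1) by (simp add: z_Suc divide_right_mono abs_triangle_ineq)
    also have "\<dots> \<le> (\<bar>z N\<bar> / b ^ j + r / 2 + (b - 1) * r / 2) / b"
      using Suc.IH N[of "N + j"] assms(1) by (intro divide_right_mono add_mono) auto
    also have "\<dots> = \<bar>z N\<bar> / b ^ Suc j + r / 2"
      using assms(1) by (simp add: field_simps)
    finally show ?case .
  qed
  have "(\<lambda>j. \<bar>z N\<bar> / b ^ j) \<longlonglongrightarrow> 0"
    using assms(1) by (rule LIMSEQ_divide_realpow_zero)
  from order_tendstoD(2)[OF this, of "r / 2"] \<open>r > 0\<close>
  obtain J where J: "\<And>j. j \<ge> J \<Longrightarrow> \<bar>z N\<bar> / b ^ j < r / 2"
    unfolding eventually_sequentially by auto
  show "\<exists>n0. \<forall>n\<ge>n0. norm (w n - A / (b - 1)) < r"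
  proof (intro exI allI impI)
    fix n assume "N + J \<le> n"
    then have "N + (n - N) = n" and "J \<le> n - N" by simp_all
    then have "\<bar>z n\<bar> \<le> \<bar>z N\<bar> / b ^ (n - N) + r / 2" and "\<bar>z N\<bar> / b ^ (n - N) < r / 2"
      using z_bound[of "n - N"] J by simp_all
    then have "\<bar>z n\<bar> < r" by linarith
    then show "norm (w n - A / (b - 1)) < r" unfolding z_def by simp
  qed
qed

lemma kk_Suc:
  "10 ^ (p - 2) \<le> i \<Longrightarrow>
    kk d p (Suc i) = kk d p i + ln (real (10 * (i + 1) + d + 1) / real (10 * (i + 1) + d))"
  unfolding kk_def by simp

lemma ll_Suc:
  "10 ^ (p - 2) \<le> i \<Longrightarrow>
    ll d p (Suc i)
      = ll d p i + real (i + 1) * ln (real (10 * (i + 1) + d + 1) / real (10 * (i + 1) + d))"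
  unfolding ll_def by simp

lemma mm_Suc:
  "10 ^ (p - 2) \<le> i \<Longrightarrow>
    mm d p (Suc i) = mm d p i + ln (real (10 * (i + 1) + d) / real (10 * i + d + 1))"
  unfolding mm_def by simp

lemma nn_Suc:
  "10 ^ (p - 2) \<le> i \<Longrightarrow>
    nn d p (Suc i) = nn d p i + real i * ln (real (10 * (i + 1) + d) / real (10 * i + d + 1))"
  unfolding nn_def by simp

locale pth_digit =
  fixes d p :: nat
  assumes p_ge_2: "2 \<le> p" and d_le_9: "d \<le> 9"
begin

definition K :: nat where "K = 10 ^ (p - 2)"
definition L :: nat where "L = 10 ^ (p - 1)"

lemma L_eq_10K: "L = 10 * K"
proof -
  have "p - 1 = Suc (p - 2)" using p_ge_2 by simp
  then show ?thesis unfolding L_def K_def by simp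
qed

lemma K_pos: "0 < K"
  unfolding K_def by simp

lemma power_p_eq: "10 ^ p = 10 * L"
  using p_ge_2 unfolding L_def by (cases p) simp_all

lemma L_pos: "0 < L"
  unfolding L_def by simp

lemma L_le_mult_power: "L \<le> q \<Longrightarrow> L \<le> q * 10 ^ e"
  using le_mult_power_10[of q e] by linarith

lemma digit_at_block:
  assumes "L \<le> q" and "q < 10 * L" and "r < 10 ^ e"
  shows "digit_at p (q * 10 ^ e + r) = q mod 10"
  using digit_at_prefix[of p q r e] assms p_ge_2 unfolding power_p_eq L_def by simp

text \<open>The number of \<open>q' < q\<close> whose last digit is \<open>d\<close>.\<close>
definition count_below :: "nat \<Rightarrow> nat" where
  "count_below q = q div 10 + of_bool (d < q mod 10)"

definition ends_in_d :: "nat \<Rightarrow> nat" where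
  "ends_in_d q = of_bool (q mod 10 = d)"

lemma count_below_Suc: "count_below (Suc q) = count_below q + ends_in_d q"
  using d_le_9 unfolding count_below_def ends_in_d_def
  by (auto simp: div_Suc mod_Suc less_Suc_eq)

lemma Ncount_in_block:
  assumes "L \<le> q" and "q < 10 * L" and "r < 10 ^ e"
  shows "Ncount d p (q * 10 ^ e + r) = Ncount d p (q * 10 ^ e - 1) + ends_in_d q * (r + 1)"
  using assms(3)
proof (induction r)
  case 0
  have "L \<le> q * 10 ^ e" using assms(1) by (rule L_le_mult_power)
  moreover from this have "Suc (q * 10 ^ e - 1) = q * 10 ^ e" using L_pos by simp
  ultimately show ?case
    using Ncount_Suc[of p "q * 10 ^ e - 1" d] digit_at_block[OF assms(1,2), of 0 e]
    by (simp add: L_def ends_in_d_def)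
next
  case (Suc r)
  have "L \<le> q * 10 ^ e" using assms(1) by (rule L_le_mult_power)
  then show ?case
    using Ncount_Suc[of p "q * 10 ^ e + r" d] digit_at_block[OF assms(1,2) Suc.prems] Suc
    by (simp add: L_def ends_in_d_def)
qed

lemma count_below_L: "count_below L = K"
  unfolding count_below_def L_eq_10K by simp

lemma Ncount_across_blocks:
  assumes "L \<le> q" and "q \<le> 10 * L"
  shows "Ncount d p (q * 10 ^ e - 1) + K * 10 ^ e
    = Ncount d p (L * 10 ^ e - 1) + count_below q * 10 ^ e"
  using assms
proof (induction q rule: nat_induct_at_least)
  case base
  then show ?case by (simp add: count_below_L)
next
  case (Suc q)
  have "Suc q * 10 ^ e - 1 = q * 10 ^ e + (10 ^ e - 1)"
    by (simp add: algebra_simps)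
  then have "Ncount d p (Suc q * 10 ^ e - 1) = Ncount d p (q * 10 ^ e - 1) + ends_in_d q * 10 ^ e"
    using Ncount_in_block[OF Suc.hyps, of "10 ^ e - 1" e] Suc.prems by simp
  then show ?case
    using Suc by (simp add: count_below_Suc algebra_simps)
qed

lemma Ncount_level_start: "Ncount d p (L * 10 ^ e - 1) + K = K * 10 ^ e"
proof (induction e)
  case 0
  then show ?case using Ncount_eq_0[of "L - 1" p d] L_pos by (simp add: L_def)
next
  case (Suc e)
  have "count_below (10 * L) = L"
    unfolding count_below_def by simp
  then have "Ncount d p (L * 10 ^ Suc e - 1) + K * 10 ^ e
      = Ncount d p (L * 10 ^ e - 1) + L * 10 ^ e"
    using Ncount_across_blocks[of "10 * L" e] L_pos by (simp add: algebra_simps)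
  with Suc.IH show ?case
    unfolding L_eq_10K by simp
qed

lemma Ncount_block:
  assumes "L \<le> q" and "q < 10 * L" and "r < 10 ^ e"
  shows "Ncount d p (q * 10 ^ e + r) + K = count_below q * 10 ^ e + ends_in_d q * (r + 1)"
  using Ncount_in_block[OF assms] Ncount_across_blocks[of q e] Ncount_level_start[of e] assms
  by simp

definition cond_freq :: "nat \<Rightarrow> real" where
  "cond_freq m = real (Ncount d p m) / real (m + 1 - L)"

definition block_sum :: "nat \<Rightarrow> nat \<Rightarrow> real" where
  "block_sum M q = (\<Sum>r<M. (real (count_below q) * M - K + real (ends_in_d q) * (real r + 1))
      / (real q * M + real r + 1 - L))"

definition block_limit :: "nat \<Rightarrow> real" where
  "block_limit q = (real (count_below q) - real (ends_in_d q) * q) * ln ((q + 1) / q)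
      + real (ends_in_d q)"

lemma sum_cond_freq_block:
  assumes "L \<le> q" and "q < 10 * L"
  shows "(\<Sum>m\<in>{q * 10 ^ e..<Suc q * 10 ^ e}. cond_freq m) = block_sum (10 ^ e) q"
proof -
  have "cond_freq (r + q * 10 ^ e)
      = (real (count_below q) * 10 ^ e - K + real (ends_in_d q) * (real r + 1))
        / (real q * 10 ^ e + real r + 1 - L)" if "r < 10 ^ e" for r
  proof -
    have "real (Ncount d p (q * 10 ^ e + r)) + K
        = real (count_below q) * 10 ^ e + real (ends_in_d q) * (real r + 1)"
      using arg_cong[OF Ncount_block[OF assms that], of real] by (simp add: algebra_simps)
    then have "real (Ncount d p (q * 10 ^ e + r))
        = real (count_below q) * 10 ^ e - K + real (ends_in_d q) * (real r + 1)"
      by linarith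
    moreover have "real (r + q * 10 ^ e + 1 - L) = real q * 10 ^ e + real r + 1 - L"
      using L_le_mult_power[OF assms(1), of e] by (simp add: of_nat_diff)
    ultimately show ?thesis unfolding cond_freq_def by (simp add: add.commute)
  qed
  moreover have "{q * 10 ^ e..<Suc q * 10 ^ e} = {0 + q * 10 ^ e..<10 ^ e + q * 10 ^ e}"
    by simp
  ultimately show ?thesis
    unfolding block_sum_def by (simp only: sum.shift_bounds_nat_ivl atLeast0LessThan) simp
qed

lemma block_sum_eq_harm:
  assumes "L \<le> q" and "1 \<le> M"
  shows "block_sum M q / M = (count_below q - K / M - ends_in_d q * (q - L / M))
      * (harm (q * M - L + M) - harm (q * M - L)) + ends_in_d q"
proof -
  define D where "D = q * M - L"
  have "q \<le> q * M" using assms(2) mult_le_mono2[of 1 M q] by simp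
  with assms(1) have "L \<le> q * M" by linarith
  then have D: "real D = real q * M - L" unfolding D_def by (simp add: of_nat_diff)
  define A where "A = real (count_below q) * M - K - real (ends_in_d q) * D"
  have "(real (count_below q) * M - K + real (ends_in_d q) * (real r + 1))
      / (real q * M + real r + 1 - L) = A * (1 / (real D + 1 + real r)) + ends_in_d q" for r
  proof -
    have "real q * M + real r + 1 - L > 0"
      using D of_nat_0_le_iff[of D] of_nat_0_le_iff[of r] by linarith
    then show ?thesis unfolding A_def D by (simp add: field_simps)
  qed
  then have "block_sum M q = (\<Sum>r<M. A * (1 / (real D + 1 + real r)) + ends_in_d q)"
    unfolding block_sum_def by (intro sum.cong refl)
  also have "\<dots> = A * (harm (D + M) - harm D) + M * ends_in_d q"
    by (simp only: sum.distrib flip: sum_distrib_left) (simp add: sum_inverse_eq_harm_diff)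
  finally have "block_sum M q / M = A / M * (harm (D + M) - harm D) + ends_in_d q"
    using assms(2) by (simp add: add_divide_distrib)
  moreover have "A / M = count_below q - K / M - ends_in_d q * (q - L / M)"
    unfolding A_def D using assms(2) by (simp add: field_simps)
  ultimately show ?thesis
    unfolding D_def by simp
qed

lemma block_sum_tendsto:
  assumes "L \<le> q"
  shows "(\<lambda>M. block_sum M q / M) \<longlonglongrightarrow> block_limit q"
proof -
  have "0 < q" using assms L_pos by simp
  then have "(\<lambda>M. (count_below q - K / M - ends_in_d q * (q - L / M))
      * (harm (q * M - L + M) - harm (q * M - L)) + ends_in_d q)
      \<longlonglongrightarrow> (real (count_below q) - 0 - real (ends_in_d q) * (real q - 0)) * ln ((q + 1) / q)
        + ends_in_d q"
    by (intro tendsto_intros harm_diff_tendsto_ln)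
  also have "(real (count_below q) - 0 - real (ends_in_d q) * (real q - 0)) * ln ((q + 1) / q)
      + ends_in_d q = block_limit q"
    unfolding block_limit_def by (simp add: add_ac)
  finally have "(\<lambda>M. (count_below q - K / M - ends_in_d q * (q - L / M))
      * (harm (q * M - L + M) - harm (q * M - L)) + ends_in_d q) \<longlonglongrightarrow> block_limit q" .
  moreover have "\<forall>\<^sub>F M in sequentially. (count_below q - K / M - ends_in_d q * (q - L / M))
      * (harm (q * M - L + M) - harm (q * M - L)) + ends_in_d q = block_sum M q / M"
    using block_sum_eq_harm[OF assms] by (intro eventually_sequentiallyI[of 1]) simp
  ultimately show ?thesis
    by (rule Lim_transform_eventually)
qed

definition level_sum :: "nat \<Rightarrow> nat \<Rightarrow> real" where
  "level_sum e c = (\<Sum>q\<in>{L..<c}. block_sum (10 ^ e) q)"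

definition level_limit :: "nat \<Rightarrow> real" where
  "level_limit c = (\<Sum>q\<in>{L..<c}. block_limit q)"

lemma level_sum_tendsto: "(\<lambda>e. level_sum e c / 10 ^ e) \<longlonglongrightarrow> level_limit c"
proof -
  have "filterlim (\<lambda>e. 10 ^ e :: nat) sequentially sequentially"
    by (intro filterlim_subseq) (simp add: strict_mono_def)
  then have "(\<lambda>e. block_sum (10 ^ e) q / real (10 ^ e)) \<longlonglongrightarrow> block_limit q" if "L \<le> q" for q
    by (rule filterlim_compose[OF block_sum_tendsto[OF that]])
  then have "(\<lambda>e. \<Sum>q\<in>{L..<c}. block_sum (10 ^ e) q / 10 ^ e) \<longlonglongrightarrow> level_limit c"
    unfolding level_limit_def by (intro tendsto_sum) auto
  then show ?thesis
    unfolding level_sum_def by (simp add: sum_divide_distrib)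
qed

lemma sum_cond_freq_level:
  assumes "L \<le> c" and "c \<le> 10 * L"
  shows "(\<Sum>m\<in>{L * 10 ^ e..<c * 10 ^ e}. cond_freq m) = level_sum e c"
  using assms
proof (induction c rule: nat_induct_at_least)
  case base
  then show ?case by (simp add: level_sum_def)
next
  case (Suc c)
  have "(\<Sum>m\<in>{L * 10 ^ e..<Suc c * 10 ^ e}. cond_freq m)
      = (\<Sum>m\<in>{L * 10 ^ e..<c * 10 ^ e}. cond_freq m)
        + (\<Sum>m\<in>{c * 10 ^ e..<Suc c * 10 ^ e}. cond_freq m)"
    using Suc.hyps by (intro sum.atLeastLessThan_concat[symmetric]) simp_all
  then show ?case
    using Suc sum_cond_freq_block[of c e] by (simp add: level_sum_def)
qed

lemma sum_cond_freq_lower_levels: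
  "(\<Sum>m\<in>{L..<L * 10 ^ e}. cond_freq m) = (\<Sum>e'<e. level_sum e' (10 * L))"
proof (induction e)
  case (Suc e)
  have "(\<Sum>m\<in>{L..<L * 10 ^ Suc e}. cond_freq m)
      = (\<Sum>m\<in>{L..<L * 10 ^ e}. cond_freq m)
        + (\<Sum>m\<in>{L * 10 ^ e..<(10 * L) * 10 ^ e}. cond_freq m)"
    using L_le_mult_power[of L e] by (simp add: sum.atLeastLessThan_concat algebra_simps)
  then show ?case
    using Suc sum_cond_freq_level[of "10 * L" e] by simp
qed simp

lemma Pprob_block_eq:
  assumes "L < c" and "c \<le> 10 * L"
  shows "Pprob d (c * 10 ^ e - 1) p
    = ((\<Sum>e'<e. level_sum e' (10 * L)) / 10 ^ e + level_sum e c / 10 ^ e) / (c - L / 10 ^ e)"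
proof -
  have "L < c * 10 ^ e" using assms(1) le_mult_power_10[of c e] by linarith
  then have "real L < real c * 10 ^ e"
    using of_nat_less_iff[of L "c * 10 ^ e", where 'a = real] by simp
  from \<open>L < c * 10 ^ e\<close> have "{L..c * 10 ^ e - 1} = {L..<c * 10 ^ e}"
    and "c * 10 ^ e - 1 + 1 - L = c * 10 ^ e - L" and "L \<le> c * 10 ^ e"
    by auto
  then have "Pprob d (c * 10 ^ e - 1) p
      = (\<Sum>m\<in>{L..<c * 10 ^ e}. cond_freq m) / (real c * 10 ^ e - L)"
    unfolding Pprob_def cond_freq_def L_def[symmetric] by (simp add: of_nat_diff)
  also have "\<dots> = ((\<Sum>e'<e. level_sum e' (10 * L)) + level_sum e c) / (real c * 10 ^ e - L)"
    using sum.atLeastLessThan_concat[of L "L * 10 ^ e" "c * 10 ^ e" cond_freq]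
      L_le_mult_power[of L e] assms
    by (simp add: sum_cond_freq_lower_levels sum_cond_freq_level)
  also have "\<dots>
      = ((\<Sum>e'<e. level_sum e' (10 * L)) / 10 ^ e + level_sum e c / 10 ^ e) / (c - L / 10 ^ e)"
    using \<open>real L < real c * 10 ^ e\<close> by (simp add: field_simps)
  finally show ?thesis .
qed

lemma Pprob_block_tendsto:
  assumes "L < c" and "c \<le> 10 * L"
  shows "(\<lambda>e. Pprob d (c * 10 ^ e - 1) p) \<longlonglongrightarrow> (level_limit (10 * L) / 9 + level_limit c) / c"
proof -
  have "(\<lambda>e. (\<Sum>e'<e. level_sum e' (10 * L)) / 10 ^ e) \<longlonglongrightarrow> level_limit (10 * L) / (10 - 1)"
    by (rule tendsto_recurrence_divide[OF _ level_sum_tendsto]) (simp_all add: field_simps)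
  then have "(\<lambda>e. (\<Sum>e'<e. level_sum e' (10 * L)) / 10 ^ e + level_sum e c / 10 ^ e)
      \<longlonglongrightarrow> level_limit (10 * L) / 9 + level_limit c"
    using level_sum_tendsto by (intro tendsto_add) simp_all
  moreover have "(\<lambda>e. real c - L / 10 ^ e) \<longlonglongrightarrow> real c - 0"
    by (intro tendsto_diff tendsto_const LIMSEQ_divide_realpow_zero) simp
  ultimately have "(\<lambda>e. ((\<Sum>e'<e. level_sum e' (10 * L)) / 10 ^ e + level_sum e c / 10 ^ e)
        / (c - L / 10 ^ e)) \<longlonglongrightarrow> (level_limit (10 * L) / 9 + level_limit c) / (real c - 0)"
    by (rule tendsto_divide) (use assms in simp)
  then show ?thesis
    using Pprob_block_eq[OF assms] by simp
qed

lemma level_limit_Suc: "L \<le> c \<Longrightarrow> level_limit (Suc c) = level_limit c + block_limit c"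
  unfolding level_limit_def by simp

lemma level_limit_run:
  assumes "L \<le> a" and "\<And>t. t < n \<Longrightarrow> (a + t) mod 10 \<noteq> d \<and> count_below (a + t) = g"
  shows "level_limit (a + n) = level_limit a + g * ln (real (a + n) / a)"
  using assms(2)
proof (induction n)
  case (Suc n)
  have "0 < a" using assms(1) L_pos by simp
  have "level_limit (a + Suc n) = level_limit (a + n) + block_limit (a + n)"
    using assms(1) level_limit_Suc[of "a + n"] by simp
  also have "\<dots> = level_limit a + g * (ln (real (a + n) / a) + ln ((a + n + 1) / (a + n)))"
  proof -
    have "(a + n) mod 10 \<noteq> d" and "count_below (a + n) = g"
      using Suc.prems[of n] by simp_all
    moreover have "level_limit (a + n) = level_limit a + g * ln (real (a + n) / a)"
      using Suc by simp
    ultimately show ?thesis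
      unfolding block_limit_def ends_in_d_def by (simp add: distrib_left add_ac)
  qed
  also have "ln (real (a + n) / a) + ln ((a + n + 1) / (a + n)) = ln (real (a + Suc n) / a)"
    using \<open>0 < a\<close> by (simp add: ln_div)
  finally show ?case .
qed simp

lemma block_limit_at_d:
  "block_limit (10 * j + d)
    = (real j - real (10 * j + d)) * ln (real (10 * j + d + 1) / real (10 * j + d)) + 1"
  using d_le_9 unfolding block_limit_def count_below_def ends_in_d_def by (simp add: add_ac)

lemma count_below_after_d:
  assumes "t < 9"
  shows "(10 * j + d + 1 + t) mod 10 \<noteq> d \<and> count_below (10 * j + d + 1 + t) = Suc j"
proof (cases "d + 1 + t < 10")
  case True
  have "(10 * j + d + 1 + t) div 10 = j"
    by (rule div_nat_eqI) (use True in simp_all)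
  moreover have "(10 * j + d + 1 + t) mod 10 = d + 1 + t"
    by (rule mod_nat_eqI) (use True in simp_all)
  ultimately show ?thesis
    unfolding count_below_def by simp
next
  case False
  have "(10 * j + d + 1 + t) div 10 = Suc j"
    by (rule div_nat_eqI) (use False assms d_le_9 in simp_all)
  moreover have "(10 * j + d + 1 + t) mod 10 = d + t - 9"
  proof (rule mod_nat_eqI)
    have "10 * j + d + 1 + t - (d + t - 9) = 10 * Suc j"
      using False by simp
    then show "10 dvd 10 * j + d + 1 + t - (d + t - 9)" by simp
  qed (use False assms d_le_9 in simp_all)
  moreover have "d + t - 9 < d"
    using False assms by linarith
  ultimately show ?thesis
    unfolding count_below_def by simp
qed

lemma count_below_before_d:
  "t < d \<Longrightarrow> (10 * j + t) mod 10 \<noteq> d \<and> count_below (10 * j + t) = j"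
  using d_le_9 unfolding count_below_def by simp

lemma level_limit_closed_form:
  assumes "K \<le> i"
  shows "level_limit (10 * i + d + 1) = real i + 1 - K - d * kk d p i - 9 * ll d p i
      + mm d p i + nn d p i + K * ln ((L + d) / L)"
  using assms
proof (induction i rule: nat_induct_at_least)
  case base
  have "level_limit (L + d) = K * ln ((L + d) / L)"
    using level_limit_run[of L d K] count_below_before_d[of _ K] by (simp add: L_eq_10K level_limit_def)
  moreover have "kk d p K = ln (real (10 * K + d + 1) / real (10 * K + d))"
    and "ll d p K = K * ln (real (10 * K + d + 1) / real (10 * K + d))"
    and "mm d p K = 0" and "nn d p K = 0"
    unfolding kk_def ll_def mm_def nn_def K_def by simp_all
  ultimately show ?case
    using level_limit_Suc[of "10 * K + d"] block_limit_at_d[of K] by (simp add: L_eq_10K algebra_simps)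
next
  case (Suc i)
  have "level_limit (10 * i + d + 1 + 9)
      = level_limit (10 * i + d + 1) + Suc i * ln ((10 * i + d + 1 + 9) / (10 * i + d + 1))"
    using Suc.hyps count_below_after_d[of _ i] by (intro level_limit_run) (simp_all add: L_eq_10K)
  then show ?case
    using Suc level_limit_Suc[of "10 * Suc i + d"] block_limit_at_d[of "Suc i"]
    by (simp add: kk_Suc ll_Suc mm_Suc nn_Suc K_def[symmetric] L_eq_10K algebra_simps)
qed

lemma level_limit_full: "level_limit (10 * L) = 9 * L * alpha_formula d p"
proof -
  have "K \<le> L - 1" using L_eq_10K K_pos by simp
  have run_end: "10 * (L - 1) + d + 1 + (9 - d) = 10 * L" and "Suc (L - 1) = L"
    using d_le_9 L_pos by simp_all
  have "real (10 * (L - 1) + d + 1) = 10 * real L - 10 + d + 1"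
    using L_pos by (simp add: of_nat_diff)
  moreover have "level_limit (10 * (L - 1) + d + 1 + (9 - d)) = level_limit (10 * (L - 1) + d + 1)
      + Suc (L - 1) * ln (real (10 * (L - 1) + d + 1 + (9 - d)) / real (10 * (L - 1) + d + 1))"
    using \<open>K \<le> L - 1\<close> count_below_after_d[of _ "L - 1"]
    by (intro level_limit_run) (simp_all add: L_eq_10K)
  ultimately have top_level: "level_limit (10 * L)
      = level_limit (10 * (L - 1) + d + 1) + L * ln (10 * real L / (10 * real L - 10 + d + 1))"
    by (simp only: run_end \<open>Suc (L - 1) = L\<close> of_nat_mult of_nat_numeral)
  have "(10::real) ^ (p - 1) = L" and "(10::real) ^ p = 10 * real L"
    using arg_cong[OF power_p_eq, of real] unfolding L_def by simp_all
  then have alpha: "alpha_formula d p = 1 / 10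
      + (nn d p (L - 1) + mm d p (L - 1) - 9 * ll d p (L - 1) - d * kk d p (L - 1)) / (9 * real L)
      + 1 / 90 * ln ((real L + d) / L) + 1 / 9 * ln (10 * real L / (10 * real L - 10 + d + 1))"
    unfolding alpha_formula_def L_def[symmetric] by (simp only:)
  have "real K = L / 10" and "real (L - 1) = real L - 1"
    using L_eq_10K L_pos by (simp_all add: of_nat_diff)
  note closed = level_limit_closed_form[OF \<open>K \<le> L - 1\<close>, unfolded this]
  show ?thesis
    unfolding top_level closed alpha using L_pos by (simp add: field_simps)
qed

lemma Pprob_tendsto_alpha: "(\<lambda>n. Pprob d (10 ^ n - 1) p) \<longlonglongrightarrow> alpha_formula d p"
proof (rule LIMSEQ_offset[where k = p])
  have "(\<lambda>e. Pprob d ((10 * L) * 10 ^ e - 1) p)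
      \<longlonglongrightarrow> (level_limit (10 * L) / 9 + level_limit (10 * L)) / real (10 * L)"
    using L_pos by (intro Pprob_block_tendsto) auto
  also have "(level_limit (10 * L) / 9 + level_limit (10 * L)) / real (10 * L) = alpha_formula d p"
    unfolding level_limit_full using L_pos by simp
  finally show "(\<lambda>e. Pprob d (10 ^ (e + p) - 1) p) \<longlonglongrightarrow> alpha_formula d p"
    by (simp add: power_add power_p_eq mult_ac)
qed

lemma Pprob_prefix_tendsto:
  assumes "10 ^ (p - 2) \<le> i" and "i \<le> 10 ^ (p - 1) - 1"
  shows "(\<lambda>n. Pprob d ((10 * i + d + 1) * 10 ^ (n + 1 - p) - 1) p) \<longlonglongrightarrow>
      (alpha_formula d p * 10 ^ (p - 1) + real i + 1 - 10 ^ (p - 2)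
        - real d * kk d p i - 9 * ll d p i + mm d p i + nn d p i
        + 10 ^ (p - 2) * ln ((10 ^ (p - 1) + real d) / 10 ^ (p - 1)))
      / real (10 * i + d + 1)"
proof (rule LIMSEQ_offset[where k = "p - 1"])
  have "K \<le> i" and "L < 10 * i + d + 1" and "10 * i + d + 1 \<le> 10 * L"
    using assms d_le_9 L_pos unfolding K_def[symmetric] L_def[symmetric] by (simp_all add: L_eq_10K)
  then have "(\<lambda>e. Pprob d ((10 * i + d + 1) * 10 ^ e - 1) p)
      \<longlonglongrightarrow> (level_limit (10 * L) / 9 + level_limit (10 * i + d + 1)) / real (10 * i + d + 1)"
    by (intro Pprob_block_tendsto)
  also have "(level_limit (10 * L) / 9 + level_limit (10 * i + d + 1)) / real (10 * i + d + 1) =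
      (alpha_formula d p * 10 ^ (p - 1) + real i + 1 - 10 ^ (p - 2)
        - real d * kk d p i - 9 * ll d p i + mm d p i + nn d p i
        + 10 ^ (p - 2) * ln ((10 ^ (p - 1) + real d) / 10 ^ (p - 1)))
      / real (10 * i + d + 1)"
  proof -
    have "real L = 10 ^ (p - 1)" and "real K = 10 ^ (p - 2)"
      unfolding L_def K_def by simp_all
    then show ?thesis
      unfolding level_limit_full level_limit_closed_form[OF \<open>K \<le> i\<close>] by (simp add: algebra_simps)
  qed
  finally show "(\<lambda>e. Pprob d ((10 * i + d + 1) * 10 ^ (e + (p - 1) + 1 - p) - 1) p) \<longlonglongrightarrow>
      (alpha_formula d p * 10 ^ (p - 1) + real i + 1 - 10 ^ (p - 2)
        - real d * kk d p i - 9 * ll d p i + mm d p i + nn d p i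
        + 10 ^ (p - 2) * ln ((10 ^ (p - 1) + real d) / 10 ^ (p - 1)))
      / real (10 * i + d + 1)"
    using p_ge_2 by simp
qed

end

theorem proposition5:
  fixes p d i :: nat
  assumes "p \<ge> 2" and "d \<le> 9"
    and "10 ^ (p - 2) \<le> i" and "i \<le> 10 ^ (p - 1) - 1"
  shows "(\<lambda>n. Pprob d (10 ^ n - 1) p) \<longlonglongrightarrow> alpha_formula d p
    \<and> (\<lambda>n. Pprob d ((10 * i + d + 1) * 10 ^ (n + 1 - p) - 1) p) \<longlonglongrightarrow>
      (alpha_formula d p * 10 ^ (p - 1) + real i + 1 - 10 ^ (p - 2)
        - real d * kk d p i - 9 * ll d p i + mm d p i + nn d p i
        + 10 ^ (p - 2) * ln ((10 ^ (p - 1) + real d) / 10 ^ (p - 1)))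
      / real (10 * i + d + 1)"
proof -
  interpret pth_digit d p
    using assms(1,2) by unfold_locales
  show ?thesis
    using Pprob_tendsto_alpha Pprob_prefix_tendsto[OF assms(3,4)] by blast
qed

end
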